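(* Let $\mathcal{G}=(V,E,\lambda)$ be a temporal graph with $m=|E|$ edges, maximum footprint degree $\Delta$, and lifetime of length $\tau$, and let $s\in V$. The procedure that initializes $B_s=\{(\bot,-\infty,\infty)\}$ and $B_v=\emptyset$ for $v\neq s$ and calls $\mathrm{improveNeighbors}(s)$ — where $\mathrm{improveNeighbors}(u)$, for every triplet $(\cdot,a,d)\in B_u$ and every neighbor $v$ of $u$, sets $a'=\min\{t\in\lambda(uv)\mid t\ge a\}$ and $d'=\max\{t\in\lambda(uv)\mid t\le d\}$ and, if $B_v+(u,a',d')\neq B_v$, sets $B_v\gets B_v+(u,a',d')$ and calls $\mathrm{improveNeighbors}(v)$ — runs in time polynomial in the size of the input, namely $O(m\Delta^2\tau^4)$. Here $B+(x,a',d')$ adds the triplet to $B$ unless some $(x,a'',d'')\in B$ has $a''\le a'$ and $d''\ge d'$, and upon adding removes all $(x,a'',d'')$ with $a'\le a''$ and $d'\ge d''$.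
   Context: A temporal graph is $\mathcal{G}=(V,E,\lambda)$ with $V$ finite, $E$ undirected edges, $\lambda:E\to 2^{\mathbb{N}}$ the time labels. The lifetime is the range of time labels, of length $\tau$. $\Delta$ is the maximum number of neighbors of a vertex in the footprint $(V,E)$. It is assumed that, for a given edge, finding the smallest (resp. largest) label within a given time range can be done in time $O(\tau)$ (as holds, e.g., with time-augmented adjacency lists or sequences of adjacency matrices). *)

theory Defs
  imports Main "HOL-Library.Extended_Real"
begin

text \<open>A triplet is (predecessor option, a, d),
  where None plays the role of bottom and a, d are extended reals (to allow -inf, +inf).\<close>

type_synonym 'v trip = "'v option \<times> ereal \<times> ereal"
type_synonym 'v bstate = "'v \<Rightarrow> 'v trip set"

definition temporal_graph :: "'v set \<Rightarrow> 'v set set \<Rightarrow> ('v set \<Rightarrow> nat set) \<Rightarrow> bool" where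
  "temporal_graph V E lam \<longleftrightarrow> finite V \<and>
     (\<forall>e\<in>E. \<exists>u v. u \<in> V \<and> v \<in> V \<and> u \<noteq> v \<and> e = {u, v})"

definition lifetime_within :: "'v set set \<Rightarrow> ('v set \<Rightarrow> nat set) \<Rightarrow> nat \<Rightarrow> bool" where
  "lifetime_within E lam tau \<longleftrightarrow> (\<exists>t0. \<forall>e\<in>E. lam e \<subseteq> {t0..<t0 + tau})"

definition nbrs :: "'v set set \<Rightarrow> 'v \<Rightarrow> 'v set" where
  "nbrs E u = {v. {u, v} \<in> E}"

definition max_degree :: "'v set \<Rightarrow> 'v set set \<Rightarrow> nat" where
  "max_degree V E = Max ((\<lambda>u. card (nbrs E u)) ` V)"

definition add_trip :: "'v trip set \<Rightarrow> 'v trip \<Rightarrow> 'v trip set" where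
  "add_trip B t = (case t of (x, a, d) \<Rightarrow>
     (if \<exists>a'' d''. (x, a'', d'') \<in> B \<and> a'' \<le> a \<and> d'' \<ge> d then B
      else insert (x, a, d) (B - {(x, a'', d'') | a'' d''. a \<le> a'' \<and> d \<ge> d''})))"

text \<open>Candidate labels for a' = min{t in lam(uv) | t >= a} and d' = max{t in lam(uv) | t <= d}.\<close>
definition arr_set :: "('v set \<Rightarrow> nat set) \<Rightarrow> 'v \<Rightarrow> 'v \<Rightarrow> ereal \<Rightarrow> nat set" where
  "arr_set lam u v a = {t \<in> lam {u, v}. ereal (real t) \<ge> a}"

definition dep_set :: "('v set \<Rightarrow> nat set) \<Rightarrow> 'v \<Rightarrow> 'v \<Rightarrow> ereal \<Rightarrow> nat set" where
  "dep_set lam u v d = {t \<in> lam {u, v}. ereal (real t) \<le> d}"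

text \<open>Iteration order of one call improveNeighbors(u): for every triplet of (a snapshot of) B_u,
  in some order, for every neighbour v of u, in some order.\<close>
definition iter_order :: "'v set set \<Rightarrow> 'v bstate \<Rightarrow> 'v \<Rightarrow> ('v trip \<times> 'v) list \<Rightarrow> bool" where
  "iter_order E B u ps \<longleftrightarrow> (\<exists>ts ns. distinct ts \<and> set ts = B u \<and>
      (\<forall>t\<in>set ts. distinct (ns t) \<and> set (ns t) = nbrs E u) \<and>
      ps = concat (map (\<lambda>t. map (Pair t) (ns t)) ts))"

text \<open>Budgeted big-step semantics (all iteration orders allowed).
  call E lam tau k B u r : running improveNeighbors(u) from state B with time budget k
  may end with r = Some (B', k') (finished, remaining budget k') or r = None (budget exhausted).
  Cost model: 1 unit per call; for each (triplet, neighbour) pair, tau units for computing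
  a' and d' (the O(tau) label lookup assumption) plus |{(x,_,_) in B_v. x = u}| + 1 units for computing and
  testing B_v + (u,a',d') (B_v stored grouped by the first component, so only the
  triplets with first component u need to be scanned).  When no label t >= a or no label t <= d exists, the pair is skipped.\<close>
inductive call :: "'v set set \<Rightarrow> ('v set \<Rightarrow> nat set) \<Rightarrow> nat \<Rightarrow> nat \<Rightarrow> 'v bstate \<Rightarrow> 'v
                    \<Rightarrow> ('v bstate \<times> nat) option \<Rightarrow> bool"
  and loop :: "'v set set \<Rightarrow> ('v set \<Rightarrow> nat set) \<Rightarrow> nat \<Rightarrow> nat \<Rightarrow> 'v bstate \<Rightarrow> 'v
                    \<Rightarrow> ('v trip \<times> 'v) list \<Rightarrow> ('v bstate \<times> nat) option \<Rightarrow> bool"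
  for E lam tau where
  call_out: "call E lam tau 0 B u None"
| call_run: "iter_order E B u ps \<Longrightarrow> loop E lam tau k B u ps r \<Longrightarrow> call E lam tau (Suc k) B u r"
| loop_nil: "loop E lam tau k B u [] (Some (B, k))"
| loop_out: "k < tau + card {t \<in> B v. fst t = Some u} + 1 \<Longrightarrow> loop E lam tau k B u (((x, a, d), v) # ps) None"
| loop_skip: "tau + card {t \<in> B v. fst t = Some u} + 1 \<le> k \<Longrightarrow>
     (arr_set lam u v a = {} \<or> dep_set lam u v d = {} \<or>
      add_trip (B v) (Some u, ereal (real (Min (arr_set lam u v a))),
                               ereal (real (Max (dep_set lam u v d)))) = B v) \<Longrightarrow>
     loop E lam tau (k - (tau + card {t \<in> B v. fst t = Some u} + 1)) B u ps r \<Longrightarrow>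
     loop E lam tau k B u (((x, a, d), v) # ps) r"
| loop_rec_out: "tau + card {t \<in> B v. fst t = Some u} + 1 \<le> k \<Longrightarrow>
     arr_set lam u v a \<noteq> {} \<Longrightarrow> dep_set lam u v d \<noteq> {} \<Longrightarrow>
     N = add_trip (B v) (Some u, ereal (real (Min (arr_set lam u v a))),
                                 ereal (real (Max (dep_set lam u v d)))) \<Longrightarrow>
     N \<noteq> B v \<Longrightarrow>
     call E lam tau (k - (tau + card {t \<in> B v. fst t = Some u} + 1)) (B(v := N)) v None \<Longrightarrow>
     loop E lam tau k B u (((x, a, d), v) # ps) None"
| loop_rec: "tau + card {t \<in> B v. fst t = Some u} + 1 \<le> k \<Longrightarrow>
     arr_set lam u v a \<noteq> {} \<Longrightarrow> dep_set lam u v d \<noteq> {} \<Longrightarrow>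
     N = add_trip (B v) (Some u, ereal (real (Min (arr_set lam u v a))),
                                 ereal (real (Max (dep_set lam u v d)))) \<Longrightarrow>
     N \<noteq> B v \<Longrightarrow>
     call E lam tau (k - (tau + card {t \<in> B v. fst t = Some u} + 1)) (B(v := N)) v (Some (B1, k1)) \<Longrightarrow>
     loop E lam tau k1 B1 u ps r \<Longrightarrow>
     loop E lam tau k B u (((x, a, d), v) # ps) r"

definition init_state :: "'v \<Rightarrow> 'v bstate" where
  "init_state s = (\<lambda>v. {})(s := {(None, -\<infinity>, \<infinity>)})"

end

theory Submission
  imports Defs
begin

(* Apart from the initial triplet, every triplet ever stored in B_v is a candidate
   (u, a, d) with uv an edge and a, d labels of uv; there are at most 4 m tau^2 of them.
   A successful update B_v <- B_v + (u, a', d') adds a candidate that was not dominated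
   before, and what is dominated stays dominated, so the number of undominated candidates
   (the potential) drops with every recursive call. Each B_u is an antichain for
   dominance within every predecessor class, hence has at most 1 + Delta tau elements, and
   one call of improveNeighbors without its recursive calls costs at most
   c = 1 + (2 tau + 1)(1 + Delta tau) Delta. A budget of c (potential + 1), which is
   O(m Delta^2 tau^4), therefore suffices. *)

definition dominated_by :: "'v trip set \<Rightarrow> 'v trip set" where
  "dominated_by S = {(x, a, d). \<exists>a' d'. (x, a', d') \<in> S \<and> a' \<le> a \<and> d \<le> d'}"

definition dominance_antichain :: "'v trip set \<Rightarrow> bool" where
  "dominance_antichain S \<longleftrightarrow> (\<forall>s\<in>S. \<forall>t\<in>S. t \<in> dominated_by {s} \<longrightarrow> t = s)"

lemma add_trip_alt_def:
  "add_trip S t = (if t \<in> dominated_by S then S else insert t (S - dominated_by {t}))"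
  by (cases t) (auto simp: add_trip_def dominated_by_def)

lemma mem_dominated_by: "t \<in> S \<Longrightarrow> t \<in> dominated_by S"
  by (cases t) (auto simp: dominated_by_def)

lemma dominated_by_mono: "S \<subseteq> T \<Longrightarrow> dominated_by S \<subseteq> dominated_by T"
  by (auto simp: dominated_by_def)

lemma dominated_by_idem [simp]: "dominated_by (dominated_by S) = dominated_by S"
  by (fastforce simp: dominated_by_def intro: order_trans)

lemma add_trip_subset: "add_trip S t \<subseteq> insert t S"
  by (auto simp: add_trip_alt_def)

lemma finite_add_trip: "finite S \<Longrightarrow> finite (add_trip S t)"
  by (meson add_trip_subset finite_insert finite_subset)

lemma add_trip_changed: "add_trip S t \<noteq> S \<Longrightarrow> t \<notin> dominated_by S \<and> t \<in> add_trip S t"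
  by (auto simp: add_trip_alt_def split: if_splits)

lemma dominated_by_add_trip: "dominated_by S \<subseteq> dominated_by (add_trip S t)"
proof (cases "t \<in> dominated_by S")
  case False
  then have "insert t (S - dominated_by {t}) = add_trip S t" by (simp add: add_trip_alt_def)
  then have "S \<subseteq> dominated_by (add_trip S t)"
    using dominated_by_mono[of "{t}" "add_trip S t"] mem_dominated_by by blast
  then show ?thesis by (metis dominated_by_idem dominated_by_mono)
qed (simp add: add_trip_alt_def)

lemma dominance_antichain_add_trip:
  assumes "dominance_antichain S"
  shows "dominance_antichain (add_trip S t)"
proof (cases "t \<in> dominated_by S")
  case False
  have "s' = s" if "s \<in> insert t (S - dominated_by {t})" "s' \<in> insert t (S - dominated_by {t})"
    and "s' \<in> dominated_by {s}" for s s'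
  proof -
    have "t \<notin> dominated_by {s}" if "s \<in> S"
      using False dominated_by_mono[of "{s}" S] that by blast
    then show ?thesis
      using that assms unfolding dominance_antichain_def by auto
  qed
  then show ?thesis using False unfolding dominance_antichain_def add_trip_alt_def by auto
qed (use assms in \<open>simp add: add_trip_alt_def\<close>)

lemma inj_on_arrival:
  assumes "dominance_antichain S"
  shows "inj_on (\<lambda>t. fst (snd t)) {t \<in> S. fst t = x}"
proof (rule inj_onI)
  fix t t' assume "t \<in> {t \<in> S. fst t = x}" "t' \<in> {t \<in> S. fst t = x}"
    "fst (snd t) = fst (snd t')"
  then obtain a d d' where "t = (x, a, d)" "t' = (x, a, d')" "t \<in> S" "t' \<in> S"
    by (cases t, cases t') auto
  moreover have "d \<le> d' \<or> d' \<le> d" by (rule linear)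
  ultimately show "t = t'"
    using assms unfolding dominance_antichain_def dominated_by_def by blast
qed

definition candidate_trips :: "'v set set \<Rightarrow> ('v set \<Rightarrow> nat set) \<Rightarrow> ('v \<times> 'v trip) set" where
  "candidate_trips E lam = {(w, Some u, ereal (real a), ereal (real d)) | w u a d.
     {u, w} \<in> E \<and> a \<in> lam {u, w} \<and> d \<in> lam {u, w}}"

definition valid_state :: "'v set set \<Rightarrow> ('v set \<Rightarrow> nat set) \<Rightarrow> 'v bstate \<Rightarrow> bool" where
  "valid_state E lam B \<longleftrightarrow> (\<forall>w. finite (B w) \<and> dominance_antichain (B w) \<and>
     (\<forall>t\<in>B w. t = (None, -\<infinity>, \<infinity>) \<or> (w, t) \<in> candidate_trips E lam))"

definition potential :: "'v set set \<Rightarrow> ('v set \<Rightarrow> nat set) \<Rightarrow> 'v bstate \<Rightarrow> nat" where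
  "potential E lam B = card (candidate_trips E lam - {(w, t). t \<in> dominated_by (B w)})"

lemma valid_init_state: "valid_state E lam (init_state s)"
  by (auto simp: valid_state_def init_state_def dominance_antichain_def dominated_by_def)

lemma max_degree_no_edges: "V \<noteq> {} \<Longrightarrow> max_degree V {} = 0"
  by (simp add: max_degree_def nbrs_def image_constant_conv)

lemma iter_order_length:
  assumes "iter_order E B u ps"
  shows "length ps = card (B u) * card (nbrs E u)"
proof -
  obtain ts ns where ts: "distinct ts" "set ts = B u"
    and ns: "\<forall>t\<in>set ts. distinct (ns t) \<and> set (ns t) = nbrs E u"
    and ps: "ps = concat (map (\<lambda>t. map (Pair t) (ns t)) ts)"
    using assms unfolding iter_order_def by blast
  have "length ps = (\<Sum>t\<leftarrow>ts. length (ns t))"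
    by (simp add: ps length_concat comp_def)
  also have "\<dots> = (\<Sum>t\<leftarrow>ts. card (nbrs E u))"
    using ns by (auto intro!: arg_cong[where f = sum_list] map_cong) (metis distinct_card)
  also have "\<dots> = card (B u) * card (nbrs E u)"
    using ts by (simp add: sum_list_triv flip: distinct_card)
  finally show ?thesis .
qed

lemma iter_order_nbrs: "iter_order E B u ps \<Longrightarrow> snd ` set ps \<subseteq> nbrs E u"
  by (auto simp: iter_order_def)

lemma iter_order_exists:
  assumes "finite (B u)" "finite (nbrs E u)"
  shows "\<exists>ps. iter_order E B u ps"
proof -
  obtain ts where "distinct ts" "set ts = B u" using finite_distinct_list[OF assms(1)] by blast
  moreover obtain ns where "distinct ns" "set ns = nbrs E u"
    using finite_distinct_list[OF assms(2)] by blast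
  ultimately have "iter_order E B u (concat (map (\<lambda>t. map (Pair t) ns) ts))"
    unfolding iter_order_def by (intro exI[of _ ts] exI[of _ "\<lambda>_. ns"]) simp
  then show ?thesis ..
qed

lemma call_loop_result_bounds:
  shows "call E lam tau k B u r \<Longrightarrow> \<forall>w. finite (B w) \<Longrightarrow>
      \<forall>B1 k1. r = Some (B1, k1) \<longrightarrow> k1 \<le> k \<and> (\<forall>w. finite (B1 w))"
    and "loop E lam tau k B u ps r \<Longrightarrow> \<forall>w. finite (B w) \<Longrightarrow>
      \<forall>B1 k1. r = Some (B1, k1) \<longrightarrow> k1 \<le> k \<and> (\<forall>w. finite (B1 w))"
proof (induction rule: call_loop.inducts)
  case (loop_skip B v u k a d ps r x)
  then show ?case by fastforce
next
  case (loop_rec B v u k a d N B1 k1 ps r x)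
  then have "\<forall>w. finite ((B(v := N)) w)" by (simp add: finite_add_trip)
  then show ?case using loop_rec.IH loop_rec.prems by fastforce
qed auto

lemma loop_exists_step:
  assumes IH: "\<And>k' B' u' ps'. k' < k \<Longrightarrow> \<forall>w. finite (B' w) \<Longrightarrow>
      (\<exists>r. call E lam tau k' B' u' r) \<and> (\<exists>r. loop E lam tau k' B' u' ps' r)"
    and finite_B: "\<forall>w. finite (B w)"
  shows "\<exists>r. loop E lam tau k B u ps r"
proof (cases ps)
  case Nil
  show ?thesis unfolding Nil by (rule exI, rule loop_nil)
next
  case (Cons p rest)
  obtain x a d v where p: "p = ((x, a, d), v)" by (metis prod.collapse)
  let ?cost = "tau + card {t \<in> B v. fst t = Some u} + 1"
  let ?N = "add_trip (B v) (Some u, ereal (real (Min (arr_set lam u v a))),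
                                    ereal (real (Max (dep_set lam u v d))))"
  consider "k < ?cost"
    | "?cost \<le> k" "arr_set lam u v a = {} \<or> dep_set lam u v d = {} \<or> ?N = B v"
    | "?cost \<le> k" "arr_set lam u v a \<noteq> {}" "dep_set lam u v d \<noteq> {}" "?N \<noteq> B v"
    by linarith
  then show ?thesis
  proof cases
    case 1
    show ?thesis unfolding Cons p by (rule exI, rule loop_out[where B = B and v = v, OF 1])
  next
    case 2
    then have "k - ?cost < k" by linarith
    then obtain r where r: "loop E lam tau (k - ?cost) B u rest r"
      using IH[OF _ finite_B, THEN conjunct2] by blast
    show ?thesis unfolding Cons p by (rule exI, rule loop_skip[where B = B and v = v, OF 2 r])
  next
    case 3
    note rec = 3(1-3) refl 3(4)
    have finite_N: "\<forall>w. finite ((B(v := ?N)) w)" using finite_B by (simp add: finite_add_trip)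
    moreover have "k - ?cost < k" using 3(1) by linarith
    ultimately obtain r1 where r1: "call E lam tau (k - ?cost) (B(v := ?N)) v r1"
      using IH[THEN conjunct1] by blast
    show ?thesis
    proof (cases r1)
      case None
      show ?thesis unfolding Cons p
        by (rule exI, rule loop_rec_out[where B = B and v = v, OF rec r1[unfolded None]])
    next
      case (Some q)
      then obtain B1 k1 where q: "r1 = Some (B1, k1)" by (cases q) auto
      then have "k1 < k" "\<forall>w. finite (B1 w)"
        using call_loop_result_bounds(1)[OF r1 finite_N] 3(1) by auto
      then obtain r where r: "loop E lam tau k1 B1 u rest r"
        using IH[THEN conjunct2] by blast
      show ?thesis unfolding Cons p
        by (rule exI, rule loop_rec[where B = B and v = v, OF rec r1[unfolded q] r])
    qed
  qed
qed

lemma call_loop_total: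
  assumes finite_nbrs: "\<And>u. finite (nbrs E u)" and "\<forall>w. finite (B w)"
  shows "(\<exists>r. call E lam tau k B u r) \<and> (\<exists>r. loop E lam tau k B u ps r)"
  using assms(2)
proof (induction k arbitrary: B u ps rule: less_induct)
  case (less k)
  have "\<exists>r. call E lam tau k B u r"
  proof (cases k)
    case 0
    show ?thesis unfolding 0 by (rule exI, rule call_out)
  next
    case (Suc k')
    have "finite (B u)" using less.prems by blast
    then obtain ps' where ps': "iter_order E B u ps'"
      using iter_order_exists finite_nbrs by metis
    have "\<exists>r. loop E lam tau k' B u ps' r"
      using Suc less by (intro loop_exists_step) auto
    then obtain r where r: "loop E lam tau k' B u ps' r" ..
    show ?thesis unfolding Suc by (rule exI, rule call_run[OF ps' r])
  qed
  moreover have "\<exists>r. loop E lam tau k B u ps r"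
    using less by (rule loop_exists_step)
  ultimately show ?case ..
qed

lemma cost_polynomial_bound:
  fixes D m t :: nat
  assumes "1 \<le> D" "1 \<le> m" "1 \<le> t"
  shows "(1 + (2 * t + 1) * ((1 + D * t) * D)) * (4 * m * t ^ 2 + 1)
    \<le> 35 * (1 + m * D ^ 2 * t ^ 4)"
proof -
  have "(2 * t + 1) * ((1 + D * t) * D) \<le> (3 * t) * ((2 * (D * t)) * D)"
    using assms by (intro mult_le_mono) auto
  then have "1 + (2 * t + 1) * ((1 + D * t) * D) \<le> 7 * (D ^ 2 * t ^ 2)"
    using assms by (simp add: power2_eq_square algebra_simps)
  moreover have "4 * m * t ^ 2 + 1 \<le> 5 * (m * t ^ 2)" using assms by simp
  ultimately have "(1 + (2 * t + 1) * ((1 + D * t) * D)) * (4 * m * t ^ 2 + 1)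
      \<le> (7 * (D ^ 2 * t ^ 2)) * (5 * (m * t ^ 2))"
    by (rule mult_le_mono)
  also have "\<dots> = 35 * (m * D ^ 2 * t ^ 4)" by (simp add: power_def algebra_simps eval_nat_numeral)
  finally show ?thesis by simp
qed

locale temporal_graph_lifetime =
  fixes V :: "'v set" and E :: "'v set set" and lam :: "'v set \<Rightarrow> nat set" and tau :: nat
  assumes temporal_graph: "temporal_graph V E lam"
    and lifetime: "lifetime_within E lam tau"
begin

lemma finite_V: "finite V"
  using temporal_graph by (simp add: temporal_graph_def)

lemma edge_doubleton: "e \<in> E \<Longrightarrow> \<exists>x y. x \<in> V \<and> y \<in> V \<and> x \<noteq> y \<and> e = {x, y}"
  using temporal_graph unfolding temporal_graph_def by (elim conjE) (rule bspec)

lemma edge_endpoints: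
  assumes "{u, v} \<in> E"
  shows "u \<in> V \<and> v \<in> V \<and> u \<noteq> v"
proof -
  obtain x y where "x \<in> V" "y \<in> V" "x \<noteq> y" "{u, v} = {x, y}"
    using edge_doubleton[OF assms] by blast
  then show ?thesis by (metis doubleton_eq_iff)
qed

lemma finite_E: "finite E"
proof -
  have "E \<subseteq> Pow V" using edge_doubleton by fastforce
  then show ?thesis using finite_V by (meson finite_Pow_iff finite_subset)
qed

lemma finite_nbrs: "finite (nbrs E u)"
proof -
  have "nbrs E u \<subseteq> V" using edge_endpoints by (auto simp: nbrs_def)
  then show ?thesis using finite_V finite_subset by blast
qed

lemma card_nbrs_le_max_degree: "card (nbrs E u) \<le> max_degree V E"
proof (cases "u \<in> V")
  case True
  then show ?thesis unfolding max_degree_def using finite_V by (intro Max_ge) auto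
next
  case False
  then have "nbrs E u = {}" using edge_endpoints by (auto simp: nbrs_def)
  then show ?thesis by simp
qed

lemma max_degree_pos:
  assumes "E \<noteq> {}"
  shows "1 \<le> max_degree V E"
proof -
  obtain x y where "x \<in> V" "y \<in> V" "x \<noteq> y" "{x, y} \<in> E"
    using edge_doubleton assms by blast
  then have "y \<in> nbrs E x" by (simp add: nbrs_def)
  then have "1 \<le> card (nbrs E x)"
    using finite_nbrs by (metis One_nat_def Suc_leI card_gt_0_iff empty_iff)
  then show ?thesis using card_nbrs_le_max_degree order_trans by blast
qed

lemma finite_labels: "e \<in> E \<Longrightarrow> finite (lam e)"
  and card_labels_le: "e \<in> E \<Longrightarrow> card (lam e) \<le> tau"
proof -
  assume "e \<in> E"
  then obtain t0 where "lam e \<subseteq> {t0..<t0 + tau}"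
    using lifetime unfolding lifetime_within_def by blast
  then show "finite (lam e)" "card (lam e) \<le> tau"
    using finite_subset card_mono[of "{t0..<t0 + tau}" "lam e"] by auto
qed

lemma finite_candidate_trips: "finite (candidate_trips E lam)"
  and card_candidate_trips_le: "card (candidate_trips E lam) \<le> 4 * card E * tau ^ 2"
proof -
  let ?f = "\<lambda>(w, u, a, d). (w, Some u, ereal (real a), ereal (real d))"
  let ?A = "\<lambda>e. ?f ` (e \<times> e \<times> lam e \<times> lam e)"
  have sub: "candidate_trips E lam \<subseteq> (\<Union>e\<in>E. ?A e)"
  proof
    fix y assume "y \<in> candidate_trips E lam"
    then obtain w u a d where y: "y = (w, Some u, ereal (real a), ereal (real d))"
      and "{u, w} \<in> E" "a \<in> lam {u, w}" "d \<in> lam {u, w}"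
      unfolding candidate_trips_def by blast
    then show "y \<in> (\<Union>e\<in>E. ?A e)" by (intro UN_I[of "{u, w}"]) force+
  qed
  have edge_card: "finite e \<and> card e = 2" if "e \<in> E" for e
    using edge_doubleton[OF that] by auto
  have finite_A: "finite (?A e)" and card_A: "card (?A e) \<le> 4 * tau ^ 2" if "e \<in> E" for e
  proof -
    have "finite e" using edge_card[OF that] by simp
    then show "finite (?A e)" using finite_labels[OF that] by simp
    have "card (?A e) \<le> card (e \<times> e \<times> lam e \<times> lam e)"
      using \<open>finite e\<close> finite_labels[OF that] by (intro card_image_le) simp
    also have "\<dots> = card e * card e * card (lam e) * card (lam e)"
      by (simp add: card_cartesian_product)
    also have "\<dots> \<le> 2 * 2 * tau * tau"
      using edge_card[OF that] card_labels_le[OF that] by (intro mult_le_mono) simp_all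
    finally show "card (?A e) \<le> 4 * tau ^ 2" by (simp add: power2_eq_square)
  qed
  have finite_union: "finite (\<Union>e\<in>E. ?A e)" using finite_E finite_A by blast
  then show "finite (candidate_trips E lam)" using sub by (rule finite_subset[rotated])
  have "card (candidate_trips E lam) \<le> card (\<Union>e\<in>E. ?A e)"
    by (rule card_mono[OF finite_union sub])
  also have "\<dots> \<le> (\<Sum>e\<in>E. card (?A e))" by (rule card_UN_le[OF finite_E])
  also have "\<dots> \<le> card E * (4 * tau ^ 2)"
    using sum_bounded_above[of E "\<lambda>e. card (?A e)"] card_A by simp
  finally show "card (candidate_trips E lam) \<le> 4 * card E * tau ^ 2" by simp
qed

lemma card_predecessor_trips_le:
  assumes valid: "valid_state E lam B"
  shows "card {t \<in> B v. fst t = Some u} \<le> tau"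
proof (cases "{u, v} \<in> E")
  case False
  then have "{t \<in> B v. fst t = Some u} = {}"
    using valid unfolding valid_state_def candidate_trips_def by auto
  then show ?thesis by (metis card.empty zero_le)
next
  case True
  let ?G = "{t \<in> B v. fst t = Some u}"
  have "inj_on (\<lambda>t. fst (snd t)) ?G"
    using valid unfolding valid_state_def by (blast intro: inj_on_arrival)
  then have "card ?G = card ((\<lambda>t. fst (snd t)) ` ?G)" by (rule card_image[symmetric])
  also have "\<dots> \<le> card ((\<lambda>a. ereal (real a)) ` lam {u, v})"
  proof (rule card_mono)
    show "finite ((\<lambda>a. ereal (real a)) ` lam {u, v})" using finite_labels[OF True] by simp
    show "(\<lambda>t. fst (snd t)) ` ?G \<subseteq> (\<lambda>a. ereal (real a)) ` lam {u, v}"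
      using valid unfolding valid_state_def candidate_trips_def by (fastforce simp: insert_commute)
  qed
  also have "\<dots> \<le> card (lam {u, v})" by (rule card_image_le[OF finite_labels[OF True]])
  also have "\<dots> \<le> tau" by (rule card_labels_le[OF True])
  finally show ?thesis .
qed

lemma card_state_le:
  assumes valid: "valid_state E lam B"
  shows "card (B u) \<le> 1 + max_degree V E * tau"
proof -
  let ?G = "\<lambda>w. {t \<in> B u. fst t = Some w}"
  have "B u \<subseteq> insert (None, -\<infinity>, \<infinity>) (\<Union>w\<in>nbrs E u. ?G w)"
    using valid unfolding valid_state_def candidate_trips_def nbrs_def
    by (fastforce simp: insert_commute)
  then have "card (B u) \<le> card (insert (None, -\<infinity>, \<infinity>) (\<Union>w\<in>nbrs E u. ?G w))"
    using valid finite_nbrs unfolding valid_state_def by (intro card_mono) auto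
  also have "\<dots> \<le> 1 + card (\<Union>w\<in>nbrs E u. ?G w)"
    by (simp add: card_insert_le_m1 card_insert_if)
  also have "card (\<Union>w\<in>nbrs E u. ?G w) \<le> (\<Sum>w\<in>nbrs E u. card (?G w))"
    by (rule card_UN_le[OF finite_nbrs])
  also have "\<dots> \<le> card (nbrs E u) * tau"
    using sum_bounded_above[of "nbrs E u" "\<lambda>w. card (?G w)"]
      card_predecessor_trips_le[OF valid] by simp
  also have "\<dots> \<le> max_degree V E * tau" using card_nbrs_le_max_degree by simp
  finally show ?thesis by simp
qed

lemma potential_le: "potential E lam B \<le> card (candidate_trips E lam)"
  unfolding potential_def using finite_candidate_trips by (intro card_mono) auto

lemma improvement_step:
  assumes valid: "valid_state E lam B" and v: "v \<in> nbrs E u"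
    and "arr_set lam u v a \<noteq> {}" "dep_set lam u v d \<noteq> {}"
    and N: "N = add_trip (B v) (Some u, ereal (real (Min (arr_set lam u v a))),
                                          ereal (real (Max (dep_set lam u v d))))"
    and changed: "N \<noteq> B v"
  shows "valid_state E lam (B(v := N)) \<and> potential E lam (B(v := N)) < potential E lam B"
proof
  let ?t = "(Some u, ereal (real (Min (arr_set lam u v a))),
                    ereal (real (Max (dep_set lam u v d))))"
  have edge: "{u, v} \<in> E" using v by (simp add: nbrs_def)
  then have "finite (arr_set lam u v a)" "finite (dep_set lam u v d)"
    using finite_labels by (simp_all add: arr_set_def dep_set_def)
  then have "Min (arr_set lam u v a) \<in> arr_set lam u v a"
    and "Max (dep_set lam u v d) \<in> dep_set lam u v d"
    using assms(3,4) by (simp_all add: Min_in Max_in)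
  then have candidate: "(v, ?t) \<in> candidate_trips E lam"
    using edge unfolding candidate_trips_def arr_set_def dep_set_def by blast
  have "finite N" "dominance_antichain N" "N \<subseteq> insert ?t (B v)"
    using valid unfolding N valid_state_def
    by (simp_all add: finite_add_trip dominance_antichain_add_trip add_trip_subset)
  moreover have "\<forall>t\<in>N. t = (None, -\<infinity>, \<infinity>) \<or> (v, t) \<in> candidate_trips E lam"
    using \<open>N \<subseteq> insert ?t (B v)\<close> valid candidate unfolding valid_state_def by blast
  ultimately show "valid_state E lam (B(v := N))"
    using valid unfolding valid_state_def by simp
  let ?D = "\<lambda>B. {(w, t). t \<in> dominated_by (B w)}"
  have "?D B \<subseteq> ?D (B(v := N))" using dominated_by_add_trip[of "B v" ?t] unfolding N by auto
  moreover have "(v, ?t) \<in> ?D (B(v := N)) - ?D B"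
    using add_trip_changed[of "B v" ?t] changed mem_dominated_by[of ?t N] unfolding N by simp
  ultimately have "candidate_trips E lam - ?D (B(v := N)) \<subset> candidate_trips E lam - ?D B"
    using candidate by blast
  then show "potential E lam (B(v := N)) < potential E lam B"
    unfolding potential_def using finite_candidate_trips by (intro psubset_card_mono) auto
qed

(* Stated additively because of truncated subtraction: the budget consumed, k - k1,
   is at most c * (potential E lam B - potential E lam B1 + 1). *)
lemma amortized_cost:
  fixes e c :: nat
  assumes pair_cost:
      "\<And>B u v. valid_state E lam B \<Longrightarrow> tau + card {t \<in> B v. fst t = Some u} + 1 \<le> e"
    and call_cost:
      "\<And>B u. valid_state E lam B \<Longrightarrow> e * (card (B u) * card (nbrs E u)) + 1 \<le> c"
  shows "call E lam tau k B u r \<Longrightarrow> valid_state E lam B \<Longrightarrow>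
      c * potential E lam B + c \<le> k \<Longrightarrow>
      \<exists>B1 k1. r = Some (B1, k1) \<and> valid_state E lam B1 \<and>
        k + c * potential E lam B1 \<le> k1 + c * potential E lam B + c"
    and "loop E lam tau k B u ps r \<Longrightarrow> valid_state E lam B \<Longrightarrow> snd ` set ps \<subseteq> nbrs E u \<Longrightarrow>
      e * length ps + c * potential E lam B \<le> k \<Longrightarrow>
      \<exists>B1 k1. r = Some (B1, k1) \<and> valid_state E lam B1 \<and>
        k + c * potential E lam B1 \<le> k1 + e * length ps + c * potential E lam B"
proof (induction rule: call_loop.inducts)
  case (call_out B u)
  then show ?case using call_cost[OF call_out.prems(1), of u] by simp
next
  case (call_run B u ps k r)
  have "e * length ps + 1 \<le> c"
    using call_cost[OF call_run.prems(1)] iter_order_length[OF call_run(1)] by simp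
  moreover have "snd ` set ps \<subseteq> nbrs E u" by (rule iter_order_nbrs[OF call_run(1)])
  ultimately show ?case using call_run by fastforce
next
  case (loop_nil k B u)
  then show ?case by simp
next
  case (loop_out k B v u x a d ps)
  then show ?case using pair_cost[OF loop_out.prems(1), of v u] by simp
next
  case (loop_skip B v u k a d ps r x)
  then show ?case using pair_cost[OF loop_skip.prems(1), of v u] by fastforce
next
  case (loop_rec_out B v u k a d N x ps)
  let ?cost = "tau + card {t \<in> B v. fst t = Some u} + 1"
  have "v \<in> nbrs E u" using loop_rec_out.prems(2) by simp
  then obtain valid_N: "valid_state E lam (B(v := N))"
    and less: "potential E lam (B(v := N)) < potential E lam B"
    using improvement_step[OF loop_rec_out.prems(1) _ loop_rec_out(2-4) \<open>N \<noteq> B v\<close>] by blast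
  have "c * potential E lam (B(v := N)) + c \<le> c * potential E lam B"
    using mult_le_mono2[OF Suc_leI[OF less], of c] by (simp add: add.commute)
  moreover have "?cost \<le> e" by (rule pair_cost[OF loop_rec_out.prems(1)])
  ultimately have "c * potential E lam (B(v := N)) + c \<le> k - ?cost"
    using loop_rec_out.prems(3) by simp
  from loop_rec_out(6)[OF valid_N this] show ?case by simp
next
  case (loop_rec B v u k a d N B1 k1 ps r x)
  let ?cost = "tau + card {t \<in> B v. fst t = Some u} + 1"
  have "v \<in> nbrs E u" using loop_rec.prems(2) by simp
  then obtain valid_N: "valid_state E lam (B(v := N))"
    and less: "potential E lam (B(v := N)) < potential E lam B"
    using improvement_step[OF loop_rec.prems(1) _ loop_rec(2-4) \<open>N \<noteq> B v\<close>] by blast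
  have decrease: "c * potential E lam (B(v := N)) + c \<le> c * potential E lam B"
    using mult_le_mono2[OF Suc_leI[OF less], of c] by (simp add: add.commute)
  have cost: "?cost \<le> e" by (rule pair_cost[OF loop_rec.prems(1)])
  have budget: "e + e * length ps + c * potential E lam B \<le> k" using loop_rec.prems(3) by simp
  then have "c * potential E lam (B(v := N)) + c \<le> k - ?cost" using decrease cost by linarith
  then obtain valid_B1: "valid_state E lam B1"
    and spent: "k - ?cost + c * potential E lam B1 \<le> k1 + c * potential E lam (B(v := N)) + c"
    using loop_rec(6)[OF valid_N] by blast
  have "snd ` set ps \<subseteq> nbrs E u" using loop_rec.prems(2) by simp
  moreover have "e * length ps + c * potential E lam B1 \<le> k1"
    using spent decrease cost budget loop_rec(1) by linarith
  ultimately show ?case using loop_rec(8)[OF valid_B1] spent decrease cost budget loop_rec(1)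
    by fastforce
qed

lemma pair_cost_le:
  "valid_state E lam B \<Longrightarrow> tau + card {t \<in> B v. fst t = Some u} + 1 \<le> 2 * tau + 1"
  using card_predecessor_trips_le by fastforce

lemma call_cost_le:
  assumes "valid_state E lam B"
  shows "(2 * tau + 1) * (card (B u) * card (nbrs E u)) + 1
    \<le> 1 + (2 * tau + 1) * ((1 + max_degree V E * tau) * max_degree V E)"
proof -
  have "card (B u) * card (nbrs E u) \<le> (1 + max_degree V E * tau) * max_degree V E"
    using card_state_le[OF assms] card_nbrs_le_max_degree by (rule mult_le_mono)
  then show ?thesis by (simp only: add_le_cancel_right mult_le_mono2 add.commute[of 1])
qed

lemma initial_budget_le:
  assumes "s \<in> V" "1 \<le> tau"
  defines "c \<equiv> 1 + (2 * tau + 1) * ((1 + max_degree V E * tau) * max_degree V E)"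
  shows "c * potential E lam (init_state s) + c \<le> 35 * (1 + card E * max_degree V E ^ 2 * tau ^ 4)"
proof (cases "E = {}")
  case True
  then have "candidate_trips E lam = {}" by (simp add: candidate_trips_def)
  then have "potential E lam (init_state s) = 0" using potential_le[of "init_state s"] by simp
  moreover have "max_degree V E = 0"
    unfolding True using assms(1) by (intro max_degree_no_edges) blast
  ultimately show ?thesis unfolding c_def by simp
next
  case False
  have "potential E lam (init_state s) \<le> 4 * card E * tau ^ 2"
    using potential_le card_candidate_trips_le by (rule le_trans)
  then have "c * potential E lam (init_state s) + c \<le> c * (4 * card E * tau ^ 2 + 1)"
    using mult_le_mono2[of "potential E lam (init_state s) + 1" _ c] by simp
  also have "\<dots> \<le> 35 * (1 + card E * max_degree V E ^ 2 * tau ^ 4)"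
  proof -
    have "1 \<le> card E" using False finite_E by (simp add: Suc_le_eq card_gt_0_iff)
    then show ?thesis
      unfolding c_def using cost_polynomial_bound max_degree_pos[OF False] assms(2) by blast
  qed
  finally show ?thesis .
qed

end

theorem theorem3:
  "\<exists>C::nat. \<forall>(V::'v set) E lam tau s.
     temporal_graph V E lam \<and> lifetime_within E lam tau \<and> 1 \<le> tau \<and> s \<in> V \<longrightarrow>
     (let K = C * (1 + card E * max_degree V E ^ 2 * tau ^ 4) in
       (\<exists>r. call E lam tau K (init_state s) s r) \<and>
       (\<forall>r. call E lam tau K (init_state s) s r \<longrightarrow> r \<noteq> None))"
proof (intro exI[of _ 35] allI impI)
  fix V :: "'v set" and E lam tau s
  assume "temporal_graph V E lam \<and> lifetime_within E lam tau \<and> 1 \<le> tau \<and> s \<in> V"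
  then have "temporal_graph V E lam" "lifetime_within E lam tau"
    and "1 \<le> tau" "s \<in> V" by auto
  interpret temporal_graph_lifetime V E lam tau by unfold_locales fact+
  let ?K = "35 * (1 + card E * max_degree V E ^ 2 * tau ^ 4)"
  have "\<forall>w. finite (init_state s w)" by (simp add: init_state_def)
  then have "\<exists>r. call E lam tau ?K (init_state s) s r"
    by (rule call_loop_total[OF finite_nbrs, THEN conjunct1])
  moreover have "r \<noteq> None" if call: "call E lam tau ?K (init_state s) s r" for r
  proof -
    let ?c = "1 + (2 * tau + 1) * ((1 + max_degree V E * tau) * max_degree V E)"
    have "\<exists>B1 k1. r = Some (B1, k1) \<and> valid_state E lam B1 \<and>
        ?K + ?c * potential E lam B1 \<le> k1 + ?c * potential E lam (init_state s) + ?c"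
      by (rule amortized_cost(1)[OF _ _ call valid_init_state initial_budget_le])
        (erule pair_cost_le, erule call_cost_le, fact+)
    then show ?thesis by auto
  qed
  ultimately show "let K = ?K in (\<exists>r. call E lam tau K (init_state s) s r) \<and>
      (\<forall>r. call E lam tau K (init_state s) s r \<longrightarrow> r \<noteq> None)"
    by simp
qed

end
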